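(* Let $W$ be a sunword with at least two proper letters and let $\sigma\prec a\prec b\prec\cdots$ be the linear order it induces on $\Sigma\setminus\{\epsilon\}$. Then $W$ admits a representative $w=\sigma a^{\lambda_1}\epsilon x_{i_2}^{\lambda_2}\epsilon x_{i_3}^{\lambda_3}\cdots\epsilon x_{i_s}^{\lambda_s}$ with $x_{i_2}\neq a$ (and consecutive letters $x_{i_h}\ne x_{i_{h+1}}$) satisfying: (i) $\lambda_1$ and $\lambda_s$ are both odd; (ii) for $h=2,\dots,s-1$, $\lambda_h$ is odd if and only if $x_{i_{h-1}}\neq x_{i_{h+1}}$ (where $x_{i_1}=a$).
   Context: Multisuns: a multisun is a graph with no induced $K_4$ minus an edge, of odd order, whose maximal cliques of size $2$ form a Hamiltonian cycle $C$ (the rim); the other maximal cliques consist of pairwise nonconsecutive vertices of $C$ (inscribed cliques). A sub-multisun deletes the edge sets of some, but not all, inscribed cliques. An $AB$-path (inscribed cliques $A,B$, possibly equal) is a subpath of $C$ with one end in $A$, the other in $B$, internal vertices in no inscribed clique; $A$-path $=AA$-path; for $v\in B$ an $Av$-path is an $AB$-path ending at $v$ in $B$. N-conditions: (N1) every $A$-path has an even number $\ge4$ of vertices; (N2) inscribed cliques have odd size; (N3) all inscribed cliques share a vertex $\xi\in V(C)$ and are otherwise disjoint; (N4) every $A\xi$-path has an even number of vertices; (N5) for $A\ne B$ every $AB$-path has an odd number of vertices. A sunoid is a multisun such that it and all its sub-multisuns satisfy the N-conditions. Words: alphabet $\Sigma$ with distinguished letter $\epsilon$; $x^k$ is $k$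 copies of $x$. The pattern $\pi(w)$ is obtained by repeatedly deleting $\epsilon\epsilon$; $v\sim w$ if related by cyclic shift and/or reversal; $u\approx v$ iff $\pi(u)\sim\pi(v)$; $[w]$ is the class (cyclic word), $w$ a representative. For a multisun satisfying the N-conditions, label rim vertices by $\sigma$ (in $\ge2$ inscribed cliques), a letter specific to $X$ (only in inscribed clique $X$), or $\epsilon$ (in none); reading around the rim gives $w_G$, and $[w_G]$ is its s-word; letters other than $\epsilon,\sigma$ are proper letters. A sunword is the s-word of a sunoid; with at least two proper letters it has the form $[\sigma x_{i_1}^{\lambda_1}\epsilon\cdots\epsilon x_{i_s}^{\lambda_s}]$ with positive exponents and consecutive proper letters distinct. Induced order: take a representative $\sigma u$ equal to its own pattern, replace each interval $xx$ of $u$ ($x$ proper) by $x\epsilon\epsilon x$ to get $z$, let $v=\sigma\epsilon\epsilon z\epsilon\epsilon=v_1\cdots v_N$ arranged cyclically; $\sigma$ is least and for proper $x\ne y$, $x\prec y$ iff the least cyclic distance from position $1$ to a position labeled $x$ is smaller than for $y$. *)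

theory Defs
  imports Main
begin

datatype 'a letter = Eps | Sig | Prop 'a

text \<open>Pattern: normal form under repeated deletion of factors Eps Eps
 (computed by a stack-style reduction; this rewriting is confluent).\<close>
fun pattern :: "'a letter list \<Rightarrow> 'a letter list" where
  "pattern [] = []"
| "pattern (x # xs) =
     (case pattern xs of
        Eps # ys \<Rightarrow> (if x = Eps then ys else x # Eps # ys)
      | ys \<Rightarrow> x # ys)"

definition cyc_rel :: "'b list \<Rightarrow> 'b list \<Rightarrow> bool" where
  "cyc_rel v w \<longleftrightarrow> (\<exists>r. v = rotate r w \<or> v = rev (rotate r w))"

definition approx :: "'a letter list \<Rightarrow> 'a letter list \<Rightarrow> bool" where
  "approx u v \<longleftrightarrow> cyc_rel (pattern u) (pattern v)"

definition cls :: "'a letter list \<Rightarrow> 'a letter list set" where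
  "cls w = {u. approx u w}"

definition clique :: "nat set \<Rightarrow> (nat \<Rightarrow> nat \<Rightarrow> bool) \<Rightarrow> nat set \<Rightarrow> bool" where
  "clique V E K \<longleftrightarrow> K \<subseteq> V \<and> (\<forall>u\<in>K. \<forall>v\<in>K. u \<noteq> v \<longrightarrow> E u v)"

definition maxclique :: "nat set \<Rightarrow> (nat \<Rightarrow> nat \<Rightarrow> bool) \<Rightarrow> nat set \<Rightarrow> bool" where
  "maxclique V E K \<longleftrightarrow> clique V E K \<and> (\<forall>K'. clique V E K' \<and> K \<subseteq> K' \<longrightarrow> K' = K)"

definition simple_graph :: "nat set \<Rightarrow> (nat \<Rightarrow> nat \<Rightarrow> bool) \<Rightarrow> bool" where
  "simple_graph V E \<longleftrightarrow> finite V \<and> (\<forall>u v. E u v \<longrightarrow> u \<in> V \<and> v \<in> V \<and> u \<noteq> v \<and> E v u)"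

definition diamond_free :: "nat set \<Rightarrow> (nat \<Rightarrow> nat \<Rightarrow> bool) \<Rightarrow> bool" where
  "diamond_free V E \<longleftrightarrow> \<not> (\<exists>a\<in>V. \<exists>b\<in>V. \<exists>c\<in>V. \<exists>d\<in>V. distinct [a,b,c,d] \<and>
      E a b \<and> E a c \<and> E a d \<and> E b c \<and> E b d \<and> \<not> E c d)"

definition inscribed :: "nat set \<Rightarrow> (nat \<Rightarrow> nat \<Rightarrow> bool) \<Rightarrow> nat set set" where
  "inscribed V E = {K. maxclique V E K \<and> card K \<noteq> 2}"

text \<open>G is a multisun with rim the Hamiltonian cycle given by the list cyc
 (cyc!i adjacent to cyc!((i+1) mod n)).\<close>
definition multisun_with :: "nat set \<Rightarrow> (nat \<Rightarrow> nat \<Rightarrow> bool) \<Rightarrow> nat list \<Rightarrow> bool" where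
  "multisun_with V E cyc \<longleftrightarrow>
     simple_graph V E \<and> diamond_free V E \<and> odd (card V) \<and>
     distinct cyc \<and> set cyc = V \<and> length cyc \<ge> 3 \<and>
     {K. maxclique V E K \<and> card K = 2} =
       {{cyc ! i, cyc ! ((i + 1) mod length cyc)} | i. i < length cyc} \<and>
     (\<forall>K. maxclique V E K \<and> card K \<noteq> 2 \<longrightarrow>
        (\<forall>i<length cyc. \<forall>j<length cyc. cyc ! i \<in> K \<and> cyc ! j \<in> K \<longrightarrow>
            j \<noteq> (i + 1) mod length cyc))"

definition multisun :: "nat set \<Rightarrow> (nat \<Rightarrow> nat \<Rightarrow> bool) \<Rightarrow> bool" where
  "multisun V E \<longleftrightarrow> (\<exists>cyc. multisun_with V E cyc)"

definition rpos :: "nat list \<Rightarrow> nat \<Rightarrow> nat \<Rightarrow> nat" where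
  "rpos cyc p j = cyc ! ((p + j) mod length cyc)"

text \<open>Subpath of the rim starting at position p with k edges (k+1 vertices),
 whose internal vertices lie in no inscribed clique.\<close>
definition free_path :: "nat set \<Rightarrow> (nat \<Rightarrow> nat \<Rightarrow> bool) \<Rightarrow> nat list \<Rightarrow> nat \<Rightarrow> nat \<Rightarrow> bool" where
  "free_path V E cyc p k \<longleftrightarrow> p < length cyc \<and> 1 \<le> k \<and> k < length cyc \<and>
     (\<forall>j. 0 < j \<and> j < k \<longrightarrow> rpos cyc p j \<notin> \<Union>(inscribed V E))"

definition N_conditions :: "nat set \<Rightarrow> (nat \<Rightarrow> nat \<Rightarrow> bool) \<Rightarrow> nat list \<Rightarrow> bool" where
  "N_conditions V E cyc \<longleftrightarrow> (let I = inscribed V E in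
     \<comment> \<open>N1\<close>
     (\<forall>A\<in>I. \<forall>p k. free_path V E cyc p k \<and> rpos cyc p 0 \<in> A \<and> rpos cyc p k \<in> A
         \<longrightarrow> even (k + 1) \<and> k + 1 \<ge> 4) \<and>
     \<comment> \<open>N2\<close>
     (\<forall>A\<in>I. odd (card A)) \<and>
     (\<exists>\<xi>. \<xi> \<in> set cyc \<and>
       \<comment> \<open>N3\<close>
       (\<forall>A\<in>I. \<xi> \<in> A) \<and> (\<forall>A\<in>I. \<forall>B\<in>I. A \<noteq> B \<longrightarrow> A \<inter> B = {\<xi>}) \<and>
       \<comment> \<open>N4\<close>
       (\<forall>A\<in>I. \<forall>B\<in>I. \<xi> \<in> B \<longrightarrow> (\<forall>p k. free_path V E cyc p k \<and>
          ((rpos cyc p 0 \<in> A \<and> rpos cyc p k = \<xi>) \<or> (rpos cyc p 0 = \<xi> \<and> rpos cyc p k \<in> A))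
          \<longrightarrow> even (k + 1)))) \<and>
     \<comment> \<open>N5\<close>
     (\<forall>A\<in>I. \<forall>B\<in>I. A \<noteq> B \<longrightarrow> (\<forall>p k. free_path V E cyc p k \<and>
          ((rpos cyc p 0 \<in> A - B \<and> rpos cyc p k \<in> B - A) \<or>
           (rpos cyc p 0 \<in> B - A \<and> rpos cyc p k \<in> A - B))
          \<longrightarrow> odd (k + 1))))"

definition satisfies_N :: "nat set \<Rightarrow> (nat \<Rightarrow> nat \<Rightarrow> bool) \<Rightarrow> bool" where
  "satisfies_N V E \<longleftrightarrow> (\<forall>cyc. multisun_with V E cyc \<longrightarrow> N_conditions V E cyc)"

definition del_cliques :: "(nat \<Rightarrow> nat \<Rightarrow> bool) \<Rightarrow> nat set set \<Rightarrow> nat \<Rightarrow> nat \<Rightarrow> bool" where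
  "del_cliques E D u v \<longleftrightarrow> E u v \<and> \<not> (\<exists>K\<in>D. u \<in> K \<and> v \<in> K)"

definition sunoid :: "nat set \<Rightarrow> (nat \<Rightarrow> nat \<Rightarrow> bool) \<Rightarrow> bool" where
  "sunoid V E \<longleftrightarrow> multisun V E \<and> satisfies_N V E \<and>
     (\<forall>D. D \<subseteq> inscribed V E \<and> D \<noteq> {} \<and> D \<noteq> inscribed V E \<longrightarrow>
        satisfies_N V (del_cliques E D))"

definition vlabel :: "nat set \<Rightarrow> (nat \<Rightarrow> nat \<Rightarrow> bool) \<Rightarrow> (nat set \<Rightarrow> 'a) \<Rightarrow> nat \<Rightarrow> 'a letter" where
  "vlabel V E f v =
     (if card {K \<in> inscribed V E. v \<in> K} \<ge> 2 then Sig
      else if (\<exists>K \<in> inscribed V E. v \<in> K)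
           then Prop (f (THE K. K \<in> inscribed V E \<and> v \<in> K))
      else Eps)"

text \<open>Sunword: s-word of a sunoid; the rim is read starting from a vertex
 lying in some inscribed clique.\<close>
definition sunword :: "'a letter list set \<Rightarrow> bool" where
  "sunword W \<longleftrightarrow> (\<exists>V E cyc (f :: nat set \<Rightarrow> 'a) r.
     sunoid V E \<and> multisun_with V E cyc \<and> inj_on f (inscribed V E) \<and>
     r < length cyc \<and> cyc ! r \<in> \<Union>(inscribed V E) \<and>
     W = cls (map (vlabel V E f) (rotate r cyc)))"

fun expand :: "'a letter list \<Rightarrow> 'a letter list" where
  "expand (x # y # r) =
     (if x = y \<and> (\<exists>c. x = Prop c) then x # Eps # Eps # expand (y # r)
      else x # expand (y # r))"
| "expand xs = xs"

definition vword :: "'a letter list \<Rightarrow> 'a letter list" where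
  "vword u = [Sig, Eps, Eps] @ expand u @ [Eps, Eps]"

definition ldist :: "'a letter list \<Rightarrow> 'a letter \<Rightarrow> nat" where
  "ldist v x = Min {min i (length v - i) | i. i < length v \<and> v ! i = x}"

definition induced_least :: "'a letter list set \<Rightarrow> 'a \<Rightarrow> bool" where
  "induced_least W a \<longleftrightarrow> (\<exists>u. Sig # u \<in> W \<and> pattern (Sig # u) = Sig # u \<and>
     Prop a \<in> set u \<and>
     (\<forall>b. Prop b \<in> set u \<and> b \<noteq> a \<longrightarrow> ldist (vword u) (Prop a) < ldist (vword u) (Prop b)))"

definition block_word :: "'a list \<Rightarrow> nat list \<Rightarrow> 'a letter list" where
  "block_word xs ls = Sig # replicate (ls ! 0) (Prop (xs ! 0)) @
     concat (map (\<lambda>h. Eps # replicate (ls ! h) (Prop (xs ! h))) [1..<length xs])"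

end

theory Submission
  imports Defs
begin

definition kept :: "'a set \<Rightarrow> 'a letter \<Rightarrow> bool" where
  "kept S x \<longleftrightarrow> x = Sig \<or> (\<exists>y\<in>S. x = Prop y)"

definition distinct_props :: "'a letter \<Rightarrow> 'a letter \<Rightarrow> bool" where
  "distinct_props x y \<longleftrightarrow> (\<exists>p q. x = Prop p \<and> y = Prop q \<and> p \<noteq> q)"

definition gap_parity :: "'a set \<Rightarrow> 'a letter list \<Rightarrow> bool" where
  "gap_parity S w \<longleftrightarrow> (\<forall>us x gap y vs. w = us @ x # gap @ y # vs \<and> kept S x \<and> kept S y \<and>
     (\<forall>z\<in>set gap. \<not> kept S z) \<longrightarrow> (odd (length gap) \<longleftrightarrow> distinct_props x y))"

lemma kept_simps [simp]: "kept S Sig" "\<not> kept S Eps" "kept S (Prop y) \<longleftrightarrow> y \<in> S"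
  by (auto simp: kept_def)

lemma distinct_props_simps [simp]:
  "\<not> distinct_props Sig x" "\<not> distinct_props x Sig" "\<not> distinct_props Eps x" "\<not> distinct_props x Eps"
  "distinct_props (Prop p) (Prop q) \<longleftrightarrow> p \<noteq> q"
  by (auto simp: distinct_props_def)

lemma distinct_props_commute: "distinct_props x y \<longleftrightarrow> distinct_props y x"
  by (auto simp: distinct_props_def)

definition first_gap_parity :: "'a set \<Rightarrow> 'a letter \<Rightarrow> bool \<Rightarrow> 'a letter list \<Rightarrow> bool" where
  "first_gap_parity S x c w \<longleftrightarrow> (\<forall>gap y vs. w = gap @ y # vs \<and> kept S y \<and> (\<forall>z\<in>set gap. \<not> kept S z)
     \<longrightarrow> (c \<noteq> odd (length gap) \<longleftrightarrow> distinct_props x y))"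

lemma gap_parity_Nil [simp]: "gap_parity S []"
  by (simp add: gap_parity_def)

lemma gap_parity_Cons:
  "gap_parity S (x # w) \<longleftrightarrow> (kept S x \<longrightarrow> first_gap_parity S x False w) \<and> gap_parity S w"
proof
  assume gp: "gap_parity S (x # w)"
  have "first_gap_parity S x False w" if "kept S x"
    using gp that unfolding gap_parity_def first_gap_parity_def by (metis append_Nil)
  moreover have "gap_parity S w"
    using gp unfolding gap_parity_def by (metis append_Cons)
  ultimately show "(kept S x \<longrightarrow> first_gap_parity S x False w) \<and> gap_parity S w"
    by blast
next
  assume "(kept S x \<longrightarrow> first_gap_parity S x False w) \<and> gap_parity S w"
  then show "gap_parity S (x # w)"
    unfolding gap_parity_def first_gap_parity_def
    by (auto simp: Cons_eq_append_conv) blast+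
qed

lemma first_gap_parity_Nil [simp]: "first_gap_parity S x c []"
  by (simp add: first_gap_parity_def)

lemma first_gap_parity_Cons:
  "first_gap_parity S x c (y # w) \<longleftrightarrow>
     (if kept S y then c = distinct_props x y else first_gap_parity S x (\<not> c) w)"
proof (cases "kept S y")
  case True
  have "c = distinct_props x y" if "first_gap_parity S x c (y # w)"
    using that True unfolding first_gap_parity_def by (auto dest: spec[of _ "[]"])
  moreover have "first_gap_parity S x c (y # w)" if "c = distinct_props x y"
    using that True unfolding first_gap_parity_def by (auto simp: Cons_eq_append_conv)
  ultimately show ?thesis
    using True by auto
next
  case False
  have "first_gap_parity S x (\<not> c) w" if "first_gap_parity S x c (y # w)"
    unfolding first_gap_parity_def
  proof (intro allI impI)
    fix gap z vs assume "w = gap @ z # vs \<and> kept S z \<and> (\<forall>z\<in>set gap. \<not> kept S z)"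
    then show "((\<not> c) \<noteq> odd (length gap)) = distinct_props x z"
      using that False unfolding first_gap_parity_def by (auto dest!: spec[of _ "y # gap"])
  qed
  moreover have "first_gap_parity S x c (y # w)" if "first_gap_parity S x (\<not> c) w"
    using that False unfolding first_gap_parity_def by (fastforce simp: Cons_eq_append_conv)
  ultimately show ?thesis
    using False by auto
qed

fun parity_scan :: "'a set \<Rightarrow> 'a letter \<Rightarrow> bool \<Rightarrow> 'a letter list \<Rightarrow> bool" where
  "parity_scan S x c [] \<longleftrightarrow> True"
| "parity_scan S x c (y # w) \<longleftrightarrow>
     (if kept S y then c = distinct_props x y \<and> parity_scan S y False w
      else parity_scan S x (\<not> c) w)"

lemma parity_scan_iff: "parity_scan S x c w \<longleftrightarrow> first_gap_parity S x c w \<and> gap_parity S w"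
  by (induction w arbitrary: x c) (auto simp: first_gap_parity_Cons gap_parity_Cons)

lemma gap_parity_kept_Cons:
  "kept S x \<Longrightarrow> gap_parity S (x # w) \<longleftrightarrow> parity_scan S x False w"
  by (simp add: gap_parity_Cons parity_scan_iff)

lemma gap_parity_rev_imp: "gap_parity S w \<Longrightarrow> gap_parity S (rev w)"
  unfolding gap_parity_def
proof (intro allI impI)
  fix us x gap y vs
  assume gp: "\<forall>us x gap y vs. w = us @ x # gap @ y # vs \<and> kept S x \<and> kept S y \<and>
      (\<forall>z\<in>set gap. \<not> kept S z) \<longrightarrow> (odd (length gap) \<longleftrightarrow> distinct_props x y)"
    and dec: "rev w = us @ x # gap @ y # vs \<and> kept S x \<and> kept S y \<and> (\<forall>z\<in>set gap. \<not> kept S z)"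
  then have "w = rev (us @ x # gap @ y # vs)"
    by (metis rev_rev_ident)
  then have "w = rev vs @ y # rev gap @ x # rev us"
    by simp
  then show "odd (length gap) \<longleftrightarrow> distinct_props x y"
    using gp[rule_format, of "rev vs" y "rev gap" x "rev us"] dec by (simp add: distinct_props_commute)
qed

lemma gap_parity_rev [simp]: "gap_parity S (rev w) \<longleftrightarrow> gap_parity S w"
  using gap_parity_rev_imp[of S w] gap_parity_rev_imp[of S "rev w"] by auto

lemma gap_parityI_nth:
  assumes "\<And>i j. i < j \<Longrightarrow> j < length w \<Longrightarrow> kept S (w ! i) \<Longrightarrow> kept S (w ! j) \<Longrightarrow>
      (\<And>k. i < k \<Longrightarrow> k < j \<Longrightarrow> \<not> kept S (w ! k)) \<Longrightarrow>
      odd (j - i - 1) \<longleftrightarrow> distinct_props (w ! i) (w ! j)"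
  shows "gap_parity S w"
  unfolding gap_parity_def
proof (intro allI impI)
  fix us x gap y vs
  assume dec: "w = us @ x # gap @ y # vs \<and> kept S x \<and> kept S y \<and> (\<forall>z\<in>set gap. \<not> kept S z)"
  define i where "i = length us"
  define j where "j = length us + length gap + 1"
  have ends: "w ! i = x" "w ! j = y"
    using dec by (simp_all add: i_def j_def nth_append)
  have "\<not> kept S (w ! k)" if "i < k" "k < j" for k
  proof -
    define m where "m = k - i - 1"
    have "k = i + Suc m" "m < length gap"
      using that by (auto simp: m_def i_def j_def)
    then have "w ! k = gap ! m" "m < length gap"
      using dec by (simp_all add: i_def nth_append)
    then show ?thesis
      using dec by (metis nth_mem)
  qed
  moreover have "i < j" "j < length w"
    using dec by (auto simp: i_def j_def)
  ultimately have "odd (j - i - 1) \<longleftrightarrow> distinct_props (w ! i) (w ! j)"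
    using dec ends by (intro assms) auto
  moreover have "j - i - 1 = length gap"
    by (simp add: i_def j_def)
  ultimately show "odd (length gap) \<longleftrightarrow> distinct_props x y"
    unfolding ends by (simp only:)
qed

lemma pattern_Cons_if:
  "pattern (x # w) =
     (if x = Eps \<and> pattern w \<noteq> [] \<and> hd (pattern w) = Eps then tl (pattern w) else x # pattern w)"
  by (cases "pattern w" rule: list.exhaust; cases x; auto split: letter.split)

declare pattern.simps(2) [simp del]

lemma pattern_Cons_not_Eps: "x \<noteq> Eps \<Longrightarrow> pattern (x # w) = x # pattern w"
  by (simp add: pattern_Cons_if)

lemma pattern_append:
  "pattern w = [] \<or> hd (pattern w) \<noteq> Eps \<Longrightarrow> pattern (v @ w) = pattern v @ pattern w"
  by (induction v) (auto simp: pattern_Cons_if hd_append)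

lemma mem_pattern_iff: "y \<noteq> Eps \<Longrightarrow> y \<in> set (pattern w) \<longleftrightarrow> y \<in> set w"
proof (induction w)
  case (Cons x w)
  then show ?case
    by (cases "pattern w") (auto simp: pattern_Cons_if)
qed simp

lemma parity_scan_pattern: "parity_scan S x c (pattern w) \<longleftrightarrow> parity_scan S x c w"
proof (induction w arbitrary: x c)
  case (Cons y w)
  show ?case
  proof (cases "y = Eps \<and> pattern w \<noteq> [] \<and> hd (pattern w) = Eps")
    case True
    then obtain v where v: "pattern w = Eps # v" "y = Eps"
      by (cases "pattern w") auto
    then have "parity_scan S x c (pattern (y # w)) = parity_scan S x (\<not> c) (pattern w)"
      by (simp add: pattern_Cons_if)
    also have "\<dots> = parity_scan S x c (y # w)"
      using Cons.IH[of x "\<not> c"] v by simp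
    finally show ?thesis .
  next
    case False
    then have "pattern (y # w) = y # pattern w"
      unfolding pattern_Cons_if by (rule if_not_P)
    then show ?thesis
      using Cons.IH by simp
  qed
qed simp

lemma gap_parity_pattern: "kept S x \<Longrightarrow> gap_parity S (x # pattern w) \<longleftrightarrow> gap_parity S (x # w)"
  by (simp add: gap_parity_kept_Cons parity_scan_pattern)

fun eps_reduced :: "'a letter list \<Rightarrow> bool" where
  "eps_reduced (Eps # Eps # _) \<longleftrightarrow> False"
| "eps_reduced (x # w) \<longleftrightarrow> eps_reduced w"
| "eps_reduced [] \<longleftrightarrow> True"

lemma eps_reduced_Cons: "eps_reduced (x # w) \<longleftrightarrow> eps_reduced w \<and> \<not> (x = Eps \<and> w \<noteq> [] \<and> hd w = Eps)"
proof (cases w)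
  case (Cons y v)
  then show ?thesis
    by (cases x; cases y) auto
qed (cases x; auto)

lemma eps_reduced_pattern: "eps_reduced (pattern w)"
proof (induction w)
  case (Cons x w)
  then show ?case
    by (cases "pattern w") (auto simp: pattern_Cons_if eps_reduced_Cons)
qed simp

lemma gap_parityD:
  "gap_parity S (us @ x # gap @ y # vs) \<Longrightarrow> kept S x \<Longrightarrow> kept S y \<Longrightarrow> \<forall>z\<in>set gap. \<not> kept S z \<Longrightarrow>
     odd (length gap) \<longleftrightarrow> distinct_props x y"
  unfolding gap_parity_def by blast

lemma gap_parity_adjacent:
  "gap_parity S (us @ x # y # vs) \<Longrightarrow> kept S x \<Longrightarrow> kept S y \<Longrightarrow> \<not> distinct_props x y"
  using gap_parityD[of S us x "[]" y vs] by simp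

lemma gap_parity_single_Eps:
  "gap_parity S (us @ x # Eps # y # vs) \<Longrightarrow> kept S x \<Longrightarrow> kept S y \<Longrightarrow> distinct_props x y"
  using gap_parityD[of S us x "[Eps]" y vs] by simp

lemma odd_first_exponent:
  assumes "gap_parity {y} (Sig # replicate l (Prop x) @ Eps # Prop y # w)" "x \<noteq> y"
  shows "odd l"
  using gap_parityD[of "{y}" "[]" Sig "replicate l (Prop x) @ [Eps]" "Prop y" w] assms by auto

lemma odd_last_exponent:
  assumes "gap_parity {x} (w @ Prop x # Eps # replicate l (Prop y) @ [Sig])" "x \<noteq> y"
  shows "odd l"
  using gap_parityD[of "{x}" w "Prop x" "Eps # replicate l (Prop y)" Sig "[]"] assms by auto

lemma odd_middle_exponent_iff:
  assumes "gap_parity {x, z} (w @ Prop x # Eps # replicate l (Prop y) @ Eps # Prop z # v)" "y \<noteq> x" "y \<noteq> z"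
  shows "odd l \<longleftrightarrow> x \<noteq> z"
  using gap_parityD[of "{x, z}" w "Prop x" "Eps # replicate l (Prop y) @ [Eps]" "Prop z" v] assms by auto

definition blocks :: "'a list \<Rightarrow> nat list \<Rightarrow> 'a letter list" where
  "blocks xs ls = concat (map (\<lambda>(x, l). Eps # replicate l (Prop x)) (zip xs ls))"

lemma blocks_Nil [simp]: "blocks [] ls = []"
  by (simp add: blocks_def)

lemma blocks_Cons [simp]: "blocks (x # xs) (l # ls) = Eps # replicate l (Prop x) @ blocks xs ls"
  by (simp add: blocks_def)

lemma blocks_append:
  "length xs = length ls \<Longrightarrow> blocks (xs @ ys) (ls @ ms) = blocks xs ls @ blocks ys ms"
  by (simp add: blocks_def)

lemma block_word_Cons:
  assumes "length xs = length ls"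
  shows "block_word (x # xs) (l # ls) = Sig # replicate l (Prop x) @ blocks xs ls"
proof -
  have "concat (map (\<lambda>h. Eps # replicate (ls ! h) (Prop (xs ! h))) [0..<length xs]) = blocks xs ls"
    using assms
  proof (induction xs arbitrary: ls)
    case (Cons y xs)
    then obtain m ms where "ls = m # ms"
      by (cases ls) auto
    then show ?case
      using Cons by (simp add: upt_conv_Cons map_Suc_upt[symmetric] comp_def del: upt_Suc)
  qed simp
  then show ?thesis
    unfolding block_word_def by (simp add: map_Suc_upt[symmetric] comp_def del: upt_Suc)
qed

lemma Prop_mem_blocks:
  "length xs = length ls \<Longrightarrow> \<forall>m\<in>set ls. 0 < m \<Longrightarrow> z \<in> set xs \<Longrightarrow> Prop z \<in> set (blocks xs ls)"
proof (induction xs arbitrary: ls)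
  case (Cons x xs)
  then obtain l ls' where "ls = l # ls'"
    by (cases ls) auto
  then show ?case
    using Cons by (cases l) auto
qed simp

lemma block_decomposition:
  assumes "eps_reduced (Prop x # r)" "Sig \<notin> set r" "last (Prop x # r) \<noteq> Eps"
    and "\<And>us vs p q. Prop x # r = us @ Prop p # Prop q # vs \<Longrightarrow> p = q"
    and "\<And>us vs p q. Prop x # r = us @ Prop p # Eps # Prop q # vs \<Longrightarrow> p \<noteq> q"
  shows "\<exists>l xs ls. Prop x # r = replicate l (Prop x) @ blocks xs ls \<and> 0 < l \<and>
    length xs = length ls \<and> (\<forall>m\<in>set ls. 0 < m) \<and> successively (\<noteq>) (x # xs)"
  using assms
proof (induction r arbitrary: x rule: induct_list012)
  case 1
  then show ?case
    by (intro exI[of _ 1] exI[of _ "[]"]) auto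
next
  case (2 y)
  then obtain p where "y = Prop p"
    by (cases y) auto
  with "2.prems"(4)[where us="[]" and vs="[]" and p=x and q=p] show ?case
    by (intro exI[of _ 2] exI[of _ "[]"]) (auto simp: numeral_2_eq_2)
next
  case (3 y z zs)
  show ?case
  proof (cases y)
    case (Prop p)
    with "3.prems"(4)[where us="[]" and vs="z # zs" and p=x and q=p] have "p = x"
      by auto
    have "\<exists>l xs ls. Prop x # z # zs = replicate l (Prop x) @ blocks xs ls \<and> 0 < l \<and>
        length xs = length ls \<and> (\<forall>m\<in>set ls. 0 < m) \<and> successively (\<noteq>) (x # xs)"
    proof (rule "3.IH"(2))
      fix us vs p' q'
      assume "Prop x # z # zs = us @ Prop p' # Prop q' # vs"
      then show "p' = q'"
        using "3.prems"(4)[where us="Prop x # us"] Prop \<open>p = x\<close> by simp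
    next
      fix us vs p' q'
      assume "Prop x # z # zs = us @ Prop p' # Eps # Prop q' # vs"
      then show "p' \<noteq> q'"
        using "3.prems"(5)[where us="Prop x # us"] Prop \<open>p = x\<close> by simp
    qed (use "3.prems" Prop \<open>p = x\<close> in \<open>auto simp: eps_reduced_Cons\<close>)
    then obtain l xs ls where "Prop x # z # zs = replicate l (Prop x) @ blocks xs ls" "0 < l"
      "length xs = length ls" "\<forall>m\<in>set ls. 0 < m" "successively (\<noteq>) (x # xs)"
      by blast
    then show ?thesis
      using Prop \<open>p = x\<close> by (intro exI[of _ "Suc l"] exI[of _ xs] exI[of _ ls]) auto
  next
    case Eps
    obtain q where z: "z = Prop q"
      using "3.prems"(1,2) Eps by (cases z) (auto simp: eps_reduced_Cons)
    have "x \<noteq> q"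
      using "3.prems"(5)[where us="[]" and vs=zs and p=x and q=q] Eps z by simp
    have "\<exists>l xs ls. Prop q # zs = replicate l (Prop q) @ blocks xs ls \<and> 0 < l \<and>
        length xs = length ls \<and> (\<forall>m\<in>set ls. 0 < m) \<and> successively (\<noteq>) (q # xs)"
    proof (rule "3.IH"(1))
      fix us vs p' q'
      assume "Prop q # zs = us @ Prop p' # Prop q' # vs"
      then show "p' = q'"
        using "3.prems"(4)[where us="Prop x # Eps # us"] Eps z by simp
    next
      fix us vs p' q'
      assume "Prop q # zs = us @ Prop p' # Eps # Prop q' # vs"
      then show "p' \<noteq> q'"
        using "3.prems"(5)[where us="Prop x # Eps # us"] Eps z by simp
    qed (use "3.prems" Eps z in \<open>auto simp: eps_reduced_Cons\<close>)
    then obtain l xs ls where "Prop q # zs = replicate l (Prop q) @ blocks xs ls" "0 < l"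
      "length xs = length ls" "\<forall>m\<in>set ls. 0 < m" "successively (\<noteq>) (q # xs)"
      by blast
    then show ?thesis
      using Eps z \<open>x \<noteq> q\<close>
      by (intro exI[of _ 1] exI[of _ "q # xs"] exI[of _ "l # ls"]) auto
  next
    case Sig
    then show ?thesis
      using "3.prems"(2) by simp
  qed
qed

lemma blocks_split:
  assumes "length xs = length ls" "\<forall>m\<in>set ls. 0 < m" "0 < l" "g < length xs"
  shows "\<exists>A. replicate l (Prop x) @ blocks xs ls =
    A @ Prop ((x # xs) ! g) # Eps # replicate (ls ! g) (Prop (xs ! g)) @ blocks (drop (Suc g) xs) (drop (Suc g) ls)"
proof -
  have "blocks xs ls = blocks (take g xs) (take g ls) @ blocks (drop g xs) (drop g ls)"
    using blocks_append[of "take g xs" "take g ls" "drop g xs" "drop g ls"] assms(1) by simp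
  moreover have "blocks (drop g xs) (drop g ls) =
      Eps # replicate (ls ! g) (Prop (xs ! g)) @ blocks (drop (Suc g) xs) (drop (Suc g) ls)"
    using assms(1,4) by (simp add: Cons_nth_drop_Suc[symmetric])
  moreover have snoc: "\<exists>A. replicate n y = A @ [y]" if "0 < n" for n and y :: "'a letter"
    using that by (metis gr0_implies_Suc replicate_Suc replicate_append_same)
  moreover have "\<exists>A. replicate l (Prop x) @ blocks (take g xs) (take g ls) = A @ [Prop ((x # xs) ! g)]"
  proof (cases g)
    case 0
    then show ?thesis
      using snoc assms(3) by auto
  next
    case (Suc g')
    then have "take g xs = take g' xs @ [xs ! g']" "take g ls = take g' ls @ [ls ! g']"
      using assms(1,4) by (auto simp: take_Suc_conv_app_nth)
    moreover obtain A where "replicate (ls ! g') (Prop (xs ! g')) = A @ [Prop (xs ! g')]"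
      using snoc assms Suc by (metis Suc_lessD nth_mem)
    ultimately show ?thesis
      using assms(1,4) Suc blocks_append[of "take g' xs" "take g' ls" "[xs ! g']" "[ls ! g']"]
      by auto
  qed
  ultimately show ?thesis
    by auto
qed

lemma eps_reduced_iff: "eps_reduced w \<longleftrightarrow> (\<forall>us vs. w \<noteq> us @ Eps # Eps # vs)"
proof (induction w)
  case (Cons x w)
  then show ?case
    by (cases w) (auto simp: eps_reduced_Cons Cons_eq_append_conv)
qed simp

definition props :: "'a letter list \<Rightarrow> 'a set" where
  "props w = {x. Prop x \<in> set w}"

definition rim_parity :: "'a letter list \<Rightarrow> bool" where
  "rim_parity r \<longleftrightarrow> Sig \<notin> set r \<and> (\<forall>S. S \<noteq> {} \<and> S \<subseteq> props r \<longrightarrow> gap_parity S (Sig # r @ [Sig]))"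

lemma props_rev [simp]: "props (rev w) = props w"
  by (simp add: props_def)

lemma rim_parity_rev [simp]: "rim_parity (rev r) \<longleftrightarrow> rim_parity r"
proof -
  have "rev (Sig # r @ [Sig]) = Sig # rev r @ [Sig]"
    by simp
  then show ?thesis
    unfolding rim_parity_def by (metis gap_parity_rev props_rev set_rev)
qed

lemma block_word_of_rim_parity:
  assumes "eps_reduced r" "rim_parity r" "p \<noteq> q" "p \<in> props r" "q \<in> props r"
  shows "\<exists>xs ls. length xs = length ls \<and> length xs \<ge> 2 \<and> Prop (xs ! 0) = hd r \<and>
    (\<forall>h. Suc h < length xs \<longrightarrow> xs ! h \<noteq> xs ! Suc h) \<and>
    (\<forall>h < length ls. ls ! h > 0) \<and>
    block_word xs ls = Sig # r \<and>
    odd (ls ! 0) \<and> odd (last ls) \<and>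
    (\<forall>h. 0 < h \<and> Suc h < length xs \<longrightarrow> (odd (ls ! h) \<longleftrightarrow> xs ! (h - 1) \<noteq> xs ! Suc h))"
proof -
  have no_Sig: "Sig \<notin> set r"
    and parity: "\<And>S. S \<noteq> {} \<Longrightarrow> S \<subseteq> props r \<Longrightarrow> gap_parity S (Sig # r @ [Sig])"
    using assms(2) by (auto simp: rim_parity_def)
  have gp: "gap_parity (props r) (Sig # r @ [Sig])"
    using parity assms(4) by blast
  have kept: "kept (props r) z" if "z \<in> set r" "z \<noteq> Eps" for z
    by (cases z) (use that no_Sig in \<open>simp_all add: props_def\<close>)
  have reduced: "r \<noteq> us @ Eps # Eps # vs" for us vs
    using assms(1) eps_reduced_iff by blast
  obtain x r1 where r: "r = Prop x # r1"
  proof (cases r)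
    case Nil
    then show ?thesis
      using assms(4) by (simp add: props_def)
  next
    case (Cons z r1)
    moreover have "z \<noteq> Eps"
    proof
      assume z: "z = Eps"
      obtain y rest where "r1 @ [Sig] = y # rest" "kept (props r) y"
        using reduced[of "[]"] kept Cons z by (cases r1) auto
      then show False
        using gap_parity_single_Eps[of "props r" "[]" Sig y rest] gp Cons z by simp
    qed
    ultimately show ?thesis
      using that no_Sig by (cases z) auto
  qed
  have "last r \<noteq> Eps"
  proof
    assume "last r = Eps"
    moreover have "butlast r \<noteq> []"
      using r \<open>last r = Eps\<close> by (cases r1) auto
    then obtain r' z where "butlast r = r' @ [z]"
      by (cases "butlast r" rule: rev_exhaust) auto
    ultimately have r': "r = r' @ [z, Eps]"
      using append_butlast_last_id[of r] r by simp
    then have "z \<noteq> Eps" "kept (props r) z"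
      using reduced[of r' "[]"] kept[of z] by auto
    then show False
      using gap_parity_single_Eps[of "props r" "Sig # r'" z Sig "[]"] gp r' by simp
  qed
  obtain l0 xs ls where blocks: "r = replicate l0 (Prop x) @ blocks xs ls" "0 < l0"
    "length xs = length ls" "\<forall>m\<in>set ls. 0 < m" "successively (\<noteq>) (x # xs)"
  proof -
    have "\<exists>l xs ls. Prop x # r1 = replicate l (Prop x) @ blocks xs ls \<and> 0 < l \<and>
        length xs = length ls \<and> (\<forall>m\<in>set ls. 0 < m) \<and> successively (\<noteq>) (x # xs)"
    proof (rule block_decomposition)
      fix us vs p q
      assume "Prop x # r1 = us @ Prop p # Prop q # vs"
      then show "p = q"
        using gap_parity_adjacent[of "props r" "Sig # us" "Prop p" "Prop q" "vs @ [Sig]"] gp r by (auto simp: props_def)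
    next
      fix us vs p q
      assume "Prop x # r1 = us @ Prop p # Eps # Prop q # vs"
      then show "p \<noteq> q"
        using gap_parity_single_Eps[of "props r" "Sig # us" "Prop p" "Prop q" "vs @ [Sig]"] gp r by (auto simp: props_def)
    qed (use assms(1) no_Sig \<open>last r \<noteq> Eps\<close> r in auto)
    then show ?thesis
      using that r by blast
  qed
  have letters: "z \<in> props r" if "z \<in> set (x # xs)" for z
    using that blocks Prop_mem_blocks[of xs ls z] by (cases l0) (auto simp: props_def)
  have "xs \<noteq> []"
    using blocks(1) assms(3-5) by (auto simp: props_def)
  define X where "X = x # xs"
  define L where "L = l0 # ls"
  have X_props: "X ! h \<in> props r" if "h < length X" for h
    using letters nth_mem[OF that] by (simp add: X_def)
  have distinct_neighbours: "X ! h \<noteq> X ! Suc h" if "Suc h < length X" for h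
    using blocks(5) that successively_nth unfolding X_def by blast
  have "odd l0"
  proof -
    obtain y xs' m ls' where "xs = y # xs'" "ls = Suc m # ls'"
      using \<open>xs \<noteq> []\<close> blocks(3,4) by (cases xs; cases ls) (auto simp: gr0_conv_Suc)
    moreover have "gap_parity {y} (Sig # r @ [Sig])"
      using parity letters calculation by simp
    ultimately show ?thesis
      using odd_first_exponent[of y l0 x] blocks(1,5) by simp
  qed
  moreover have "odd (last ls)"
  proof -
    define g where "g = length xs - 1"
    have g: "g < length xs" "Suc g = length xs"
      using \<open>xs \<noteq> []\<close> by (auto simp: g_def)
    then obtain A where A: "r = A @ Prop (X ! g) # Eps # replicate (ls ! g) (Prop (xs ! g))"
      using blocks_split[OF blocks(3,4,2) g(1), of x] blocks(1,3) by (auto simp: X_def)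
    moreover have "ls \<noteq> []"
      using blocks(3) \<open>xs \<noteq> []\<close> by auto
    then have "xs ! g = last xs" "ls ! g = last ls"
      using blocks(3) \<open>xs \<noteq> []\<close> by (simp_all add: g_def last_conv_nth)
    moreover have "X ! g \<noteq> last xs"
      using distinct_neighbours[of g] g(1) calculation by (simp add: X_def)
    moreover have "gap_parity {X ! g} (Sig # r @ [Sig])"
      using parity X_props[of g] g by (simp add: X_def)
    ultimately show ?thesis
      using odd_last_exponent[of "X ! g" "Sig # A" "last ls" "last xs"] by simp
  qed
  moreover have "odd (L ! h) \<longleftrightarrow> X ! (h - 1) \<noteq> X ! Suc h" if h: "0 < h" "Suc h < length X" for h
  proof -
    obtain g where g: "h = Suc g" "Suc g < length xs"
      using h by (cases h) (auto simp: X_def)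
    obtain A where A: "r = A @ Prop (X ! g) # Eps # replicate (ls ! g) (Prop (xs ! g)) @
        blocks (drop (Suc g) xs) (drop (Suc g) ls)"
      using blocks_split[OF blocks(3,4,2), of g x] blocks(1) g by (auto simp: X_def)
    have "ls ! Suc g > 0"
      using blocks(3,4) g by simp
    then obtain k where "ls ! Suc g = Suc k"
      using gr0_implies_Suc by blast
    then have "blocks (drop (Suc g) xs) (drop (Suc g) ls) =
        Eps # Prop (xs ! Suc g) # replicate k (Prop (xs ! Suc g)) @ blocks (drop (Suc (Suc g)) xs) (drop (Suc (Suc g)) ls)"
      using g blocks(3) by (simp add: Cons_nth_drop_Suc[symmetric])
    moreover have "X ! g \<noteq> xs ! g" "xs ! g \<noteq> xs ! Suc g"
      using distinct_neighbours[of g] distinct_neighbours[of "Suc g"] g by (auto simp: X_def)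
    moreover have "gap_parity {X ! g, xs ! Suc g} (Sig # r @ [Sig])"
      using parity X_props[of g] X_props[of "Suc (Suc g)"] g by (simp add: X_def)
    ultimately have "odd (ls ! g) \<longleftrightarrow> X ! g \<noteq> xs ! Suc g"
      using odd_middle_exponent_iff[of "X ! g" "xs ! Suc g" "Sig # A" "ls ! g" "xs ! g"] A by auto
    then show ?thesis
      using g by (simp add: X_def L_def)
  qed
  moreover have "block_word X L = Sig # r"
    using blocks block_word_Cons by (simp add: X_def L_def)
  moreover have "\<forall>h < length L. L ! h > 0"
    using blocks(2,4) by (auto simp: L_def nth_Cons split: nat.split)
  ultimately show ?thesis
    using \<open>xs \<noteq> []\<close> blocks(3) distinct_neighbours r
    by (intro exI[of _ X] exI[of _ L]) (auto simp: X_def L_def Suc_le_eq)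
qed

lemma set_subset_expand: "set u \<subseteq> set (expand u)"
  by (induction u rule: expand.induct) auto

lemma expand_Cons: "\<exists>v. expand (x # u) = x # v"
  by (cases u) auto

lemma ldist_vword_hd:
  assumes "hd u = Prop b" "u \<noteq> []"
  shows "ldist (vword u) (Prop b) \<le> 3"
proof -
  define v where "v = vword u"
  obtain e where "expand u = Prop b # e"
    using assms expand_Cons[of "hd u" "tl u"] by (cases u) auto
  then have "v ! 3 = Prop b" "6 \<le> length v"
    by (simp_all add: v_def vword_def)
  then have "min 3 (length v - 3) \<in> {min i (length v - i) | i. i < length v \<and> v ! i = Prop b}"
    by (intro CollectI exI[of _ 3]) auto
  then have "ldist v (Prop b) \<le> min 3 (length v - 3)"
    unfolding ldist_def by (rule Min_le[rotated]) simp
  then show ?thesis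
    by (simp add: v_def)
qed

lemma ldist_vword_Prop:
  assumes "Prop a \<in> set u"
  shows "3 \<le> ldist (vword u) (Prop a)"
proof -
  define v where "v = vword u"
  define D where "D = {min i (length v - i) | i. i < length v \<and> v ! i = Prop a}"
  have "Prop a \<in> set v"
    using assms set_subset_expand[of u] by (auto simp: v_def vword_def)
  then have "D \<noteq> {}"
    by (auto simp: D_def in_set_conv_nth)
  moreover have "3 \<le> d" if "d \<in> D" for d
  proof -
    obtain i where i: "d = min i (length v - i)" "i < length v" "v ! i = Prop a"
      using \<open>d \<in> D\<close> by (auto simp: D_def)
    have "v = [Sig, Eps, Eps] @ expand u @ [Eps, Eps]"
      by (simp add: v_def vword_def)
    then have "3 \<le> i" "3 \<le> length v - i"
      using i(2,3) by (auto simp: nth_append nth_Cons split: if_splits nat.splits)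
    then show ?thesis
      using i(1) by simp
  qed
  moreover have "finite D"
    by (simp add: D_def)
  ultimately show ?thesis
    unfolding v_def ldist_def D_def[symmetric, unfolded v_def] by simp
qed

lemma pattern_rotate:
  assumes "w \<noteq> []" "hd w = Sig" "hd (rotate d w) \<noteq> Eps"
  shows "\<exists>m. pattern (rotate d w) = rotate m (pattern w)"
proof -
  define u1 where "u1 = take (d mod length w) w"
  define u2 where "u2 = drop (d mod length w) w"
  have w: "w = u1 @ u2" and rot: "rotate d w = u2 @ u1"
    by (simp_all add: u1_def u2_def rotate_drop_take)
  have "u2 \<noteq> []"
    using assms(1) by (simp add: u2_def not_le)
  then have "hd u2 \<noteq> Eps"
    using assms(3) rot by simp
  then have "pattern u2 = [] \<or> hd (pattern u2) \<noteq> Eps"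
    using \<open>u2 \<noteq> []\<close> by (cases u2) (auto simp: pattern_Cons_not_Eps)
  moreover have "pattern u1 = [] \<or> hd (pattern u1) \<noteq> Eps"
    using assms(2) w by (cases u1) (auto simp: pattern_Cons_not_Eps)
  ultimately have "pattern (rotate d w) = pattern u2 @ pattern u1" "pattern w = pattern u1 @ pattern u2"
    using w rot pattern_append by auto
  then show ?thesis
    by (intro exI[of _ "length (pattern u1)"]) (simp only: rotate_append)
qed

lemma cyc_rel_rotate: "cyc_rel v (rotate m w) \<Longrightarrow> cyc_rel v w"
  unfolding cyc_rel_def by (auto simp: rotate_rotate)

lemma rotate_Sig_Cons_eq:
  assumes "Sig \<notin> set r" "hd (rotate j (Sig # r)) = Sig"
  shows "rotate j (Sig # r) = Sig # r"
proof (cases "j mod length (Sig # r)")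
  case (Suc m)
  then have "m < length r"
    using mod_less_divisor[of "length (Sig # r)" j] by simp
  have "rotate j (Sig # r) = drop (Suc m) (Sig # r) @ take (Suc m) (Sig # r)"
    using Suc by (simp add: rotate_conv_mod[of j] rotate_drop_take)
  then have "hd (rotate j (Sig # r)) = r ! m"
    using \<open>m < length r\<close> by (simp add: Cons_nth_drop_Suc[symmetric])
  then show ?thesis
    using assms \<open>m < length r\<close> nth_mem by fastforce
qed (simp add: rotate_conv_mod[of j])

lemma cyc_rel_Sig_Cons:
  assumes "Sig \<notin> set r" "cyc_rel (Sig # u) (Sig # r)"
  shows "u = r \<or> u = rev r"
proof -
  obtain j where "Sig # u = rotate j (Sig # r) \<or> Sig # u = rev (rotate j (Sig # r))"
    using assms(2) unfolding cyc_rel_def by blast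
  then show ?thesis
  proof
    assume rot: "Sig # u = rotate j (Sig # r)"
    then have "hd (rotate j (Sig # r)) = Sig"
      by (simp flip: rot)
    then show ?thesis
      using rot rotate_Sig_Cons_eq[OF assms(1), of j] by simp
  next
    assume "Sig # u = rev (rotate j (Sig # r))"
    then have "rev (rotate j (Sig # r)) = Sig # u"
      by (rule sym)
    then have "rotate j (Sig # r) = rev u @ [Sig]"
      by (simp only: rev_swap rev.simps)
    then have "rotate (length u + j) (Sig # r) = Sig # rev u"
      using rotate_append[of "rev u" "[Sig]"] by (simp add: rotate_rotate[symmetric])
    then show ?thesis
      using rotate_Sig_Cons_eq[OF assms(1), of "length u + j"] by auto
  qed
qed

definition inscribed_meet_at :: "nat set \<Rightarrow> (nat \<Rightarrow> nat \<Rightarrow> bool) \<Rightarrow> nat \<Rightarrow> bool" where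
  "inscribed_meet_at V E \<xi> \<longleftrightarrow>
     (\<forall>A\<in>inscribed V E. \<forall>B\<in>inscribed V E. A \<noteq> B \<longrightarrow> A \<inter> B = {\<xi>})"

lemma multisun_with_finite: "multisun_with V E cyc \<Longrightarrow> finite V"
  by (simp add: multisun_with_def simple_graph_def)

lemma finite_inscribed: "finite V \<Longrightarrow> finite (inscribed V E)"
  by (rule finite_subset[of _ "Pow V"]) (auto simp: inscribed_def maxclique_def clique_def)

lemma clique_subset_maxclique:
  assumes "finite V" "clique V E M"
  obtains M' where "maxclique V E M'" "M \<subseteq> M'"
proof -
  have "finite {K. clique V E K}"
    by (rule finite_subset[of _ "Pow V"]) (auto simp: clique_def assms(1))
  then obtain M' where "clique V E M'" "M \<subseteq> M'" "\<forall>K. clique V E K \<longrightarrow> M' \<subseteq> K \<longrightarrow> M' = K"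
    using finite_has_maximal2[of "{K. clique V E K}" M] assms(2) by auto
  then show ?thesis
    by (intro that[of M']) (auto simp: maxclique_def)
qed

lemma rim_pair_maxclique:
  assumes "multisun_with V E cyc" "i < length cyc"
  shows "maxclique V E {cyc ! i, cyc ! ((i + 1) mod length cyc)}"
    and "card {cyc ! i, cyc ! ((i + 1) mod length cyc)} = 2"
  using assms unfolding multisun_with_def by blast+

lemma rim_pair_if_card_2:
  assumes "multisun_with V E cyc" "maxclique V E M" "card M = 2"
  obtains i where "i < length cyc" "M = {cyc ! i, cyc ! ((i + 1) mod length cyc)}"
proof -
  have "M \<in> {K. maxclique V E K \<and> card K = 2}"
    using assms(2,3) by simp
  then have "M \<in> {{cyc ! i, cyc ! ((i + 1) mod length cyc)} | i. i < length cyc}"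
    using assms(1) unfolding multisun_with_def by (elim conjE) (simp only:)
  then show ?thesis
    using that by blast
qed

lemma inscribed_avoids_rim_pair:
  assumes "multisun_with V E cyc" "K \<in> inscribed V E" "i < length cyc"
  shows "\<not> (cyc ! i \<in> K \<and> cyc ! ((i + 1) mod length cyc) \<in> K)"
proof -
  have "(i + 1) mod length cyc < length cyc"
    using assms(3) by (intro mod_less_divisor) auto
  then show ?thesis
    using assms unfolding multisun_with_def inscribed_def by blast
qed

lemma clique_del_cliques_iff:
  "clique V (del_cliques E D) K \<longleftrightarrow>
     clique V E K \<and> (\<forall>K'\<in>D. \<forall>u\<in>K. \<forall>v\<in>K. u \<noteq> v \<longrightarrow> \<not> (u \<in> K' \<and> v \<in> K'))"
  unfolding clique_def del_cliques_def by blast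

lemma maxclique_clique_del_cliques:
  assumes "multisun_with V E cyc" "inscribed_meet_at V E \<xi>" "D \<subseteq> inscribed V E"
    and "maxclique V E M" "M \<notin> D"
  shows "clique V (del_cliques E D) M"
proof (cases "card M = 2")
  case True
  then obtain i where i: "i < length cyc" "M = {cyc ! i, cyc ! ((i + 1) mod length cyc)}"
    using rim_pair_if_card_2[OF assms(1,4)] by blast
  then show ?thesis
    using assms(3,4) inscribed_avoids_rim_pair[OF assms(1) _ i(1)]
    by (auto simp: clique_del_cliques_iff maxclique_def)
next
  case False
  then have "M \<in> inscribed V E"
    using assms(4) by (simp add: inscribed_def)
  moreover have "K' \<in> inscribed V E" "M \<noteq> K'" if "K' \<in> D" for K'
    using assms(3,5) that by auto
  ultimately have meet: "M \<inter> K' = {\<xi>}" if "K' \<in> D" for K'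
    using assms(2) that unfolding inscribed_meet_at_def by blast
  have "\<not> (u \<in> K' \<and> v \<in> K')" if "K' \<in> D" "u \<in> M" "v \<in> M" "u \<noteq> v" for K' u v
  proof
    assume "u \<in> K' \<and> v \<in> K'"
    then have "u \<in> M \<inter> K'" "v \<in> M \<inter> K'"
      using that by auto
    then show False
      using meet[OF that(1)] that(4) by simp
  qed
  then show ?thesis
    using assms(4) by (simp add: clique_del_cliques_iff maxclique_def)
qed

lemma two_le_card_maxclique_del_cliques:
  assumes "multisun_with V E cyc" "inscribed_meet_at V E \<xi>" "D \<subseteq> inscribed V E"
    and "maxclique V (del_cliques E D) M"
  shows "2 \<le> card M"
proof (rule ccontr)
  assume "\<not> 2 \<le> card M"
  have "M \<subseteq> V" "finite V"
    using assms(1,4) multisun_with_finite by (auto simp: maxclique_def clique_def)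
  then have "finite M"
    by (rule finite_subset)
  have "3 \<le> length cyc" "set cyc = V"
    using assms(1) by (auto simp: multisun_with_def)
  obtain v where v: "v \<in> V" "M \<subseteq> {v}"
  proof (cases "M = {}")
    case True
    have "cyc ! 0 \<in> V"
      using nth_mem[of 0 cyc] \<open>3 \<le> length cyc\<close> \<open>set cyc = V\<close> by fastforce
    then show ?thesis
      using that True by blast
  next
    case False
    then have "card M = 1"
      using \<open>finite M\<close> \<open>\<not> 2 \<le> card M\<close> card_gt_0_iff[of M] by linarith
    then obtain v where "M = {v}"
      by (rule card_1_singletonE)
    then show ?thesis
      using that \<open>M \<subseteq> V\<close> by blast
  qed
  then obtain i where i: "i < length cyc" "cyc ! i = v"
    using \<open>set cyc = V\<close> by (auto simp: in_set_conv_nth)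
  let ?P = "{cyc ! i, cyc ! ((i + 1) mod length cyc)}"
  have "maxclique V E ?P" "card ?P = 2"
    using rim_pair_maxclique[OF assms(1) i(1)] by auto
  moreover have "?P \<notin> D"
    using calculation assms(3) by (auto simp: inscribed_def)
  ultimately have "clique V (del_cliques E D) ?P"
    using maxclique_clique_del_cliques[OF assms(1-3)] by blast
  moreover have "M \<subseteq> ?P"
    using v i by auto
  ultimately have "?P = M"
    using assms(4) unfolding maxclique_def by blast
  then show False
    using \<open>card ?P = 2\<close> \<open>\<not> 2 \<le> card M\<close> by simp
qed


lemma maxclique_del_cliques_iff:
  assumes "multisun_with V E cyc" "inscribed_meet_at V E \<xi>" "D \<subseteq> inscribed V E"
  shows "maxclique V (del_cliques E D) M \<longleftrightarrow> maxclique V E M \<and> M \<notin> D"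
proof
  assume M: "maxclique V (del_cliques E D) M"
  then have "clique V E M"
    by (simp add: maxclique_def clique_del_cliques_iff)
  then obtain M' where M': "maxclique V E M'" "M \<subseteq> M'"
    using clique_subset_maxclique multisun_with_finite[OF assms(1)] by blast
  have "M' \<notin> D"
  proof
    assume "M' \<in> D"
    have "2 \<le> card M"
      using two_le_card_maxclique_del_cliques[OF assms M] .
    then obtain u v where "u \<in> M" "v \<in> M" "u \<noteq> v"
      by (metis One_nat_def card.infinite card_le_Suc0_iff_eq not_less_eq_eq numeral_2_eq_2 zero_le)
    moreover have "clique V (del_cliques E D) M"
      using M by (simp add: maxclique_def)
    ultimately show False
      using \<open>M' \<in> D\<close> M'(2) unfolding clique_del_cliques_iff by blast
  qed
  then have "clique V (del_cliques E D) M'"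
    using maxclique_clique_del_cliques[OF assms M'(1)] by blast
  then have "M' = M"
    using M M'(2) by (simp add: maxclique_def)
  then show "maxclique V E M \<and> M \<notin> D"
    using M' \<open>M' \<notin> D\<close> by simp
next
  assume "maxclique V E M \<and> M \<notin> D"
  then show "maxclique V (del_cliques E D) M"
    using maxclique_clique_del_cliques[OF assms] by (auto simp: maxclique_def clique_del_cliques_iff)
qed

lemma inscribed_del_cliques:
  assumes "multisun_with V E cyc" "inscribed_meet_at V E \<xi>" "D \<subseteq> inscribed V E"
  shows "inscribed V (del_cliques E D) = inscribed V E - D"
  using maxclique_del_cliques_iff[OF assms] by (auto simp: inscribed_def)

lemma diamond_free_del_cliques:
  assumes "multisun_with V E cyc" "inscribed_meet_at V E \<xi>" "D \<subseteq> inscribed V E"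
  shows "diamond_free V (del_cliques E D)"
  unfolding diamond_free_def
proof
  let ?E' = "del_cliques E D"
  assume "\<exists>a\<in>V. \<exists>b\<in>V. \<exists>c\<in>V. \<exists>d\<in>V. distinct [a, b, c, d] \<and>
      ?E' a b \<and> ?E' a c \<and> ?E' a d \<and> ?E' b c \<and> ?E' b d \<and> \<not> ?E' c d"
  then obtain a b c d where abcd: "a \<in> V" "b \<in> V" "c \<in> V" "d \<in> V" "distinct [a, b, c, d]"
    "?E' a b" "?E' a c" "?E' a d" "?E' b c" "?E' b d" "\<not> ?E' c d"
    by blast
  have sg: "simple_graph V E" and df: "diamond_free V E"
    using assms(1) by (auto simp: multisun_with_def)
  have E: "E a b" "E a c" "E a d" "E b c" "E b d"
    using abcd(6-10) by (simp_all add: del_cliques_def)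
  show False
  proof (cases "E c d")
    case False
    have "\<exists>a\<in>V. \<exists>b\<in>V. \<exists>c\<in>V. \<exists>d\<in>V. distinct [a, b, c, d] \<and>
        E a b \<and> E a c \<and> E a d \<and> E b c \<and> E b d \<and> \<not> E c d"
      using abcd(1-5) E False by (intro bexI[of _ a] bexI[of _ b] bexI[of _ c] bexI[of _ d] conjI)
    then show False
      using df unfolding diamond_free_def by blast
  next
    case True
    then obtain K where K: "K \<in> D" "c \<in> K" "d \<in> K"
      using abcd(11) unfolding del_cliques_def by auto
    have "E v u" if "E u v" for u v
      using sg that by (simp add: simple_graph_def)
    then have "clique V E {a, b, c, d}"
      using abcd(1-4) E True unfolding clique_def by blast
    then obtain M where M: "maxclique V E M" "{a, b, c, d} \<subseteq> M"
      using clique_subset_maxclique multisun_with_finite[OF assms(1)] by blast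
    have "finite M"
      using M(1) multisun_with_finite[OF assms(1)] finite_subset
      by (auto simp: maxclique_def clique_def)
    then have "4 \<le> card M"
      using card_mono[OF _ M(2)] abcd(5) by fastforce
    then have "M \<in> inscribed V E"
      using M(1) by (simp add: inscribed_def)
    moreover have "K \<in> inscribed V E"
      using K assms(3) by auto
    moreover have "c \<in> M \<inter> K" "d \<in> M \<inter> K" "c \<noteq> d"
      using K M(2) abcd(5) by auto
    ultimately have "M = K"
      using assms(2) unfolding inscribed_meet_at_def by (metis singletonD)
    then show False
      using abcd(6) K(1) M(2) unfolding del_cliques_def by auto
  qed
qed

lemma multisun_with_del_cliques:
  assumes "multisun_with V E cyc" "inscribed_meet_at V E \<xi>" "D \<subseteq> inscribed V E"
  shows "multisun_with V (del_cliques E D) cyc"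
  unfolding multisun_with_def
proof (intro conjI)
  show "simple_graph V (del_cliques E D)"
    using assms(1) by (auto simp: multisun_with_def simple_graph_def del_cliques_def)
  have "{K. maxclique V (del_cliques E D) K \<and> card K = 2} = {K. maxclique V E K \<and> card K = 2}"
    using assms(3) by (auto simp: maxclique_del_cliques_iff[OF assms] inscribed_def)
  then show "{K. maxclique V (del_cliques E D) K \<and> card K = 2} =
      {{cyc ! i, cyc ! ((i + 1) mod length cyc)} | i. i < length cyc}"
    using assms(1) by (simp add: multisun_with_def)
  have "\<forall>K. maxclique V E K \<and> card K \<noteq> 2 \<longrightarrow>
      (\<forall>i<length cyc. \<forall>j<length cyc. cyc ! i \<in> K \<and> cyc ! j \<in> K \<longrightarrow> j \<noteq> (i + 1) mod length cyc)"
    using assms(1) unfolding multisun_with_def by (elim conjE) assumption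
  then show "\<forall>K. maxclique V (del_cliques E D) K \<and> card K \<noteq> 2 \<longrightarrow>
      (\<forall>i<length cyc. \<forall>j<length cyc. cyc ! i \<in> K \<and> cyc ! j \<in> K \<longrightarrow> j \<noteq> (i + 1) mod length cyc)"
    by (simp add: maxclique_del_cliques_iff[OF assms]) blast
qed (use assms(1) diamond_free_del_cliques[OF assms] in \<open>simp_all add: multisun_with_def\<close>)

lemma vlabel_eq_Eps_iff: "vlabel V E f v = Eps \<longleftrightarrow> v \<notin> \<Union>(inscribed V E)"
proof (cases "v \<in> \<Union>(inscribed V E)")
  case False
  then have empty: "{K \<in> inscribed V E. v \<in> K} = {}"
    by auto
  show ?thesis
    unfolding vlabel_def empty using False by simp
qed (auto simp: vlabel_def)

lemma vlabel_shared:
  assumes "finite (inscribed V E)" "A \<in> inscribed V E" "B \<in> inscribed V E" "A \<noteq> B" "v \<in> A" "v \<in> B"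
  shows "vlabel V E f v = Sig"
proof -
  have "card {A, B} \<le> card {K \<in> inscribed V E. v \<in> K}"
    using assms by (intro card_mono) auto
  then show ?thesis
    using assms(4) by (simp add: vlabel_def)
qed

lemma vlabel_petal:
  assumes "finite (inscribed V E)" "inscribed_meet_at V E \<xi>" "K \<in> inscribed V E" "v \<in> K" "v \<noteq> \<xi>"
  shows "vlabel V E f v = Prop (f K)"
proof -
  have unique: "K' = K" if "K' \<in> inscribed V E" "v \<in> K'" for K'
  proof (rule ccontr)
    assume "K' \<noteq> K"
    then have "K' \<inter> K = {\<xi>}"
      using assms(2,3) that(1) by (simp add: inscribed_meet_at_def)
    then show False
      using that(2) assms(4,5) by auto
  qed
  then have single: "{K' \<in> inscribed V E. v \<in> K'} = {K}"
    using assms(3,4) by blast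
  have "(THE K'. K' \<in> inscribed V E \<and> v \<in> K') = K"
    by (rule the_equality) (use unique assms(3,4) in blast)+
  then show ?thesis
    using assms(3,4) unfolding vlabel_def single by auto
qed

lemma sunoid_N_conditions_keeping:
  assumes "sunoid V E" "multisun_with V E cyc" "inscribed_meet_at V E \<xi>"
    and "K \<subseteq> inscribed V E" "K \<noteq> {}"
  shows "N_conditions V (del_cliques E (inscribed V E - K)) cyc"
proof (cases "K = inscribed V E")
  case True
  then have "del_cliques E (inscribed V E - K) = E"
    by (intro ext) (simp add: del_cliques_def)
  then show ?thesis
    using assms(1,2) by (simp add: sunoid_def satisfies_N_def)
next
  case False
  then have "satisfies_N V (del_cliques E (inscribed V E - K))"
    using assms(1,4,5) unfolding sunoid_def by blast
  moreover have "multisun_with V (del_cliques E (inscribed V E - K)) cyc"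
    using multisun_with_del_cliques[OF assms(2,3)] by blast
  ultimately show ?thesis
    by (simp add: satisfies_N_def)
qed

lemma rim_path_parity:
  assumes "N_conditions V E cyc" "inscribed_meet_at V E \<xi>" "\<forall>A\<in>inscribed V E. \<xi> \<in> A"
    and "free_path V E cyc p k" "A \<in> inscribed V E" "B \<in> inscribed V E"
    and "rpos cyc p 0 \<in> A" "rpos cyc p k \<in> B"
  shows "odd (k - 1) \<longleftrightarrow> rpos cyc p 0 \<noteq> \<xi> \<and> rpos cyc p k \<noteq> \<xi> \<and> A \<noteq> B"
proof -
  have N1: "\<forall>C\<in>inscribed V E. \<forall>p k. free_path V E cyc p k \<and> rpos cyc p 0 \<in> C \<and> rpos cyc p k \<in> C
      \<longrightarrow> even (k + 1) \<and> k + 1 \<ge> 4"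
   and N5: "\<forall>A\<in>inscribed V E. \<forall>B\<in>inscribed V E. A \<noteq> B \<longrightarrow> (\<forall>p k. free_path V E cyc p k \<and>
      ((rpos cyc p 0 \<in> A - B \<and> rpos cyc p k \<in> B - A) \<or> (rpos cyc p 0 \<in> B - A \<and> rpos cyc p k \<in> A - B))
      \<longrightarrow> odd (k + 1))"
    using assms(1)[unfolded N_conditions_def Let_def, THEN conjunct1]
      assms(1)[unfolded N_conditions_def Let_def, THEN conjunct2, THEN conjunct2, THEN conjunct2]
    by blast+
  have same: "even (k + 1)" if "C \<in> inscribed V E" "rpos cyc p 0 \<in> C" "rpos cyc p k \<in> C" for C
    using N1 assms(4) that by blast
  have different: "odd (k + 1)" if "rpos cyc p 0 \<in> A - B" "rpos cyc p k \<in> B - A" "A \<noteq> B"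
    using N5 assms(4-6) that by blast
  have "1 \<le> k"
    using assms(4) by (simp add: free_path_def)
  show ?thesis
  proof (cases "rpos cyc p 0 = \<xi> \<or> rpos cyc p k = \<xi> \<or> A = B")
    case True
    then have "even (k + 1)"
      using same[of A] same[of B] assms(3,5-8) by auto
    then show ?thesis
      using True \<open>1 \<le> k\<close> by auto
  next
    case False
    then have "A \<inter> B = {\<xi>}"
      using assms(2,5,6) by (simp add: inscribed_meet_at_def)
    then have "odd (k + 1)"
      using different False assms(7,8) by blast
    then show ?thesis
      using False \<open>1 \<le> k\<close> by (cases k) auto
  qed
qed

lemma rpos_shift: "0 < length cyc \<Longrightarrow> rpos cyc ((p0 + i) mod length cyc) m = rpos cyc p0 (i + m)"
  unfolding rpos_def by (simp add: mod_add_left_eq add.assoc)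

lemma rpos_eq_start:
  assumes "distinct cyc" "p0 < length cyc" "i \<le> length cyc" "rpos cyc p0 i = cyc ! p0"
  shows "i = 0 \<or> i = length cyc"
proof -
  have "(p0 + i) mod length cyc < length cyc"
    using assms(2) by (intro mod_less_divisor) linarith
  then have "(p0 + i) mod length cyc = p0"
    using assms(4) nth_eq_iff_index_eq[OF assms(1) _ assms(2)] unfolding rpos_def by simp
  then show ?thesis
    using assms(2,3) by (cases "p0 + i < length cyc") (auto simp: le_mod_geq)
qed

lemma rim_gap_parity:
  assumes sunoid: "sunoid V E" and ms: "multisun_with V E cyc" and inj: "inj_on f (inscribed V E)"
    and hub: "\<forall>A\<in>inscribed V E. \<xi> \<in> A" and meet: "inscribed_meet_at V E \<xi>"
    and two: "A0 \<in> inscribed V E" "B0 \<in> inscribed V E" "A0 \<noteq> B0"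
    and p0: "p0 < length cyc" "cyc ! p0 = \<xi>"
    and Kset: "Kset \<subseteq> inscribed V E" "Kset \<noteq> {}"
  shows "gap_parity (f ` Kset) (map (vlabel V E f) (rotate p0 cyc) @ [Sig])"
proof -
  define n where "n = length cyc"
  define lab where "lab = vlabel V E f"
  define E' where "E' = del_cliques E (inscribed V E - Kset)"
  define w where "w = map lab (rotate p0 cyc) @ [Sig]"
  have "distinct cyc" "odd n" "0 < n"
    using ms by (auto simp: multisun_with_def n_def distinct_card)
  have fin: "finite (inscribed V E)"
    using finite_inscribed[OF multisun_with_finite[OF ms]] .
  have lab_hub: "lab \<xi> = Sig"
    using vlabel_shared[OF fin two, of \<xi> f] hub two(1,2) by (simp add: lab_def)
  have w_nth: "w ! j = lab (rpos cyc p0 j)" if "j \<le> n" for j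
  proof (cases "j = n")
    case True
    then show ?thesis
      using p0 lab_hub by (simp add: w_def rpos_def n_def nth_append)
  next
    case False
    then show ?thesis
      using that p0 by (simp add: w_def rpos_def n_def nth_append nth_rotate add.commute)
  qed
  have "length w = Suc n"
    by (simp add: w_def n_def)
  have meet': "inscribed_meet_at V E' \<xi>" and NC: "N_conditions V E' cyc"
    and insc: "inscribed V E' = Kset"
    using meet sunoid_N_conditions_keeping[OF sunoid ms meet Kset]
      inscribed_del_cliques[OF ms meet, of "inscribed V E - Kset"] Kset(1)
    by (auto simp: E'_def inscribed_meet_at_def)
  have lab_petal: "lab v = Prop (f K)" if "K \<in> Kset" "v \<in> K" "v \<noteq> \<xi>" for v K
    using vlabel_petal[OF fin meet] that Kset(1) by (auto simp: lab_def)
  have kept_iff: "kept (f ` Kset) (lab v) \<longleftrightarrow> v \<in> \<Union>Kset" for v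
  proof (cases "v = \<xi>")
    case False
    show ?thesis
    proof (cases "v \<in> \<Union>(inscribed V E)")
      case True
      then obtain K where K: "K \<in> inscribed V E" "v \<in> K"
        by blast
      then have "lab v = Prop (f K)"
        using vlabel_petal[OF fin meet K] False by (simp add: lab_def)
      moreover have "X = K" if "X \<in> Kset" "v \<in> X" for X
      proof (rule ccontr)
        assume "X \<noteq> K"
        then have "X \<inter> K = {\<xi>}"
          using meet K(1) Kset(1) that(1) by (auto simp: inscribed_meet_at_def)
        then show False
          using that(2) K(2) False by auto
      qed
      then have "v \<in> \<Union>Kset \<longleftrightarrow> K \<in> Kset"
        using K(2) by auto
      ultimately show ?thesis
        using inj K(1) Kset(1) by (auto simp: inj_on_image_mem_iff)
    next
      case False
      then show ?thesis
        using vlabel_eq_Eps_iff[of V E f v] Kset(1) by (auto simp: lab_def)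
    qed
  qed (use lab_hub hub Kset in auto)
  have props_iff: "distinct_props (lab u) (lab v) \<longleftrightarrow> u \<noteq> \<xi> \<and> v \<noteq> \<xi> \<and> A \<noteq> B"
    if "A \<in> Kset" "B \<in> Kset" "u \<in> A" "v \<in> B" for u v A B
  proof (cases "u = \<xi> \<or> v = \<xi>")
    case False
    then have "lab u = Prop (f A)" "lab v = Prop (f B)"
      using lab_petal that by auto
    then show ?thesis
      using False inj_on_eq_iff[OF inj] Kset(1) that(1,2) by auto
  qed (use lab_hub in auto)
  show ?thesis
    unfolding w_def[symmetric] lab_def[symmetric]
  proof (rule gap_parityI_nth)
    fix i j
    assume ij: "i < j" "j < length w" and kept: "kept (f ` Kset) (w ! i)" "kept (f ` Kset) (w ! j)"
      and between: "\<And>m. i < m \<Longrightarrow> m < j \<Longrightarrow> \<not> kept (f ` Kset) (w ! m)"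
    have "j \<le> n"
      using ij \<open>length w = Suc n\<close> by simp
    show "odd (j - i - 1) \<longleftrightarrow> distinct_props (w ! i) (w ! j)"
    proof (cases "i = 0 \<and> j = n")
      case True
      then show ?thesis
        using w_nth[of 0] w_nth[of n] p0 lab_hub \<open>odd n\<close> \<open>0 < n\<close>
        by (simp add: rpos_def n_def)
    next
      case False
      define k where "k = j - i"
      define p where "p = (p0 + i) mod n"
      have shift: "rpos cyc p m = rpos cyc p0 (i + m)" for m
        using rpos_shift[of cyc p0 i] \<open>0 < n\<close> by (simp add: p_def n_def)
      have "free_path V E' cyc p k"
        unfolding free_path_def insc
      proof (intro conjI allI impI)
        show "p < length cyc" "1 \<le> k" "k < length cyc"
          using False ij \<open>j \<le> n\<close> \<open>0 < n\<close> by (auto simp: p_def k_def n_def)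
        fix m
        assume "0 < m \<and> m < k"
        then show "rpos cyc p m \<notin> \<Union>Kset"
          using between[of "i + m"] kept_iff w_nth[of "i + m"] shift \<open>j \<le> n\<close> by (auto simp: k_def)
      qed
      moreover obtain A B where AB: "A \<in> Kset" "B \<in> Kset" "rpos cyc p 0 \<in> A" "rpos cyc p k \<in> B"
        using kept kept_iff w_nth[of i] w_nth[of j] shift[of 0] shift[of k] ij \<open>j \<le> n\<close>
        by (auto simp: k_def)
      ultimately have "odd (k - 1) \<longleftrightarrow> rpos cyc p 0 \<noteq> \<xi> \<and> rpos cyc p k \<noteq> \<xi> \<and> A \<noteq> B"
        using rim_path_parity[OF NC meet'] hub Kset(1) insc by blast
      then show ?thesis
        using props_iff[OF AB] w_nth[of i] w_nth[of j] shift[of 0] shift[of k] ij \<open>j \<le> n\<close>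
        by (simp add: k_def)
    qed
  qed
qed


lemma vlabel_eq_Prop:
  assumes "finite (inscribed V E)" "vlabel V E f v = Prop x"
  shows "\<exists>K\<in>inscribed V E. v \<in> K \<and> x = f K"
proof -
  have few: "\<not> 2 \<le> card {K \<in> inscribed V E. v \<in> K}" and ex: "\<exists>K\<in>inscribed V E. v \<in> K"
    using assms(2) by (auto simp: vlabel_def split: if_splits)
  then obtain K where K: "K \<in> inscribed V E" "v \<in> K"
    by blast
  have "K' = K" if "K' \<in> inscribed V E" "v \<in> K'" for K'
  proof (rule ccontr)
    assume "K' \<noteq> K"
    then have "card {K, K'} \<le> card {K \<in> inscribed V E. v \<in> K}"
      using assms(1) K that by (intro card_mono) auto
    then show False
      using few \<open>K' \<noteq> K\<close> by simp
  qed
  then have "(THE K'. K' \<in> inscribed V E \<and> v \<in> K') = K"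
    by (rule the_equality[rotated]) (use K in blast)+
  then show ?thesis
    using assms(2) few ex K by (auto simp: vlabel_def)
qed

lemma vlabel_ne_Sig:
  assumes "finite (inscribed V E)" "inscribed_meet_at V E \<xi>" "v \<noteq> \<xi>"
  shows "vlabel V E f v \<noteq> Sig"
proof (cases "v \<in> \<Union>(inscribed V E)")
  case True
  then obtain K where "K \<in> inscribed V E" "v \<in> K"
    by blast
  then show ?thesis
    using vlabel_petal[OF assms(1,2), of K v f] assms(3) by simp
next
  case False
  then show ?thesis
    using vlabel_eq_Eps_iff[of V E f v] by simp
qed

lemma props_Cons_Sig [simp]: "props (Sig # w) = props w"
  by (simp add: props_def)

lemma props_pattern [simp]: "props (pattern w) = props w"
  using mem_pattern_iff[of "Prop _" w] by (simp add: props_def)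

lemma props_cyc_rel: "cyc_rel v w \<Longrightarrow> props v = props w"
  by (auto simp: cyc_rel_def props_def)

lemma props_cls: "u \<in> cls w \<Longrightarrow> props u = props w"
  using props_cyc_rel props_pattern by (metis approx_def cls_def mem_Collect_eq)

lemma sunoid_rim_word:
  assumes sunoid: "sunoid V E" and ms: "multisun_with V E cyc" and inj: "inj_on f (inscribed V E)"
    and two: "K1 \<in> inscribed V E" "K2 \<in> inscribed V E" "K1 \<noteq> K2"
  obtains p0 t where "p0 < length cyc" "map (vlabel V E f) (rotate p0 cyc) = Sig # t" "Sig \<notin> set t"
    "\<And>S. S \<noteq> {} \<Longrightarrow> S \<subseteq> f ` inscribed V E \<Longrightarrow> gap_parity S (Sig # t @ [Sig])"
proof -
  have "N_conditions V E cyc"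
    using sunoid ms by (simp add: sunoid_def satisfies_N_def)
  from this[unfolded N_conditions_def Let_def, THEN conjunct2, THEN conjunct2, THEN conjunct1]
  obtain \<xi> where "\<xi> \<in> set cyc" and hub: "\<forall>A\<in>inscribed V E. \<xi> \<in> A"
    and meet: "inscribed_meet_at V E \<xi>"
    unfolding inscribed_meet_at_def by (elim exE conjE) blast
  then obtain p0 where p0: "p0 < length cyc" "cyc ! p0 = \<xi>"
    by (auto simp: in_set_conv_nth)
  have fin: "finite (inscribed V E)"
    using finite_inscribed[OF multisun_with_finite[OF ms]] .
  have "distinct cyc"
    using ms by (simp add: multisun_with_def)
  have "cyc \<noteq> []"
    using p0 by auto
  then have "rotate p0 cyc \<noteq> []" "hd (rotate p0 cyc) = \<xi>"
    using p0 hd_rotate_conv_nth[of cyc p0] by auto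
  then have rot: "rotate p0 cyc = \<xi> # tl (rotate p0 cyc)"
    by (metis list.collapse)
  define t where "t = map (vlabel V E f) (tl (rotate p0 cyc))"
  have "vlabel V E f \<xi> = Sig"
    using vlabel_shared[OF fin two, of \<xi> f] hub two(1,2) by simp
  then have word: "map (vlabel V E f) (rotate p0 cyc) = Sig # t"
    by (subst rot) (simp add: t_def)
  have "\<xi> \<notin> set (tl (rotate p0 cyc))"
    using \<open>distinct cyc\<close> rot by (metis distinct.simps(2) distinct_rotate)
  then have "Sig \<notin> set t"
    using vlabel_ne_Sig[OF fin meet] unfolding t_def by (metis (mono_tags) imageE list.set_map)
  moreover have "gap_parity S (Sig # t @ [Sig])" if "S \<noteq> {}" "S \<subseteq> f ` inscribed V E" for S
  proof -
    define Kset where "Kset = {K \<in> inscribed V E. f K \<in> S}"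
    have "f ` Kset = S"
      using that(2) by (auto simp: Kset_def)
    moreover have "Kset \<subseteq> inscribed V E" "Kset \<noteq> {}"
      using that calculation by (auto simp: Kset_def)
    ultimately show ?thesis
      using rim_gap_parity[OF sunoid ms inj hub meet two p0, of Kset] word by simp
  qed
  ultimately show ?thesis
    using that[OF p0(1) word] by blast
qed

lemma sunword_reduced_representative:
  assumes "sunword W" "\<exists>w\<in>W. 2 \<le> card (props w)"
  obtains r where "\<forall>u\<in>W. cyc_rel (pattern u) (Sig # r)" "eps_reduced r" "rim_parity r"
proof -
  obtain V E cyc and f :: "nat set \<Rightarrow> 'a" and r0 where
    sunoid: "sunoid V E" and ms: "multisun_with V E cyc" and inj: "inj_on f (inscribed V E)"
    and r0: "r0 < length cyc" "cyc ! r0 \<in> \<Union>(inscribed V E)"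
    and W: "W = cls (map (vlabel V E f) (rotate r0 cyc))"
    using assms(1) unfolding sunword_def by blast
  define lab where "lab = vlabel V E f"
  define w0 where "w0 = map lab (rotate r0 cyc)"
  have fin: "finite (inscribed V E)"
    using finite_inscribed[OF multisun_with_finite[OF ms]] .
  have letters: "props w0 \<subseteq> f ` inscribed V E"
  proof
    fix x
    assume "x \<in> props w0"
    then have "Prop x \<in> vlabel V E f ` set (rotate r0 cyc)"
      by (simp add: props_def w0_def lab_def)
    then obtain v where "vlabel V E f v = Prop x"
      by (metis imageE)
    then obtain K where "K \<in> inscribed V E" "x = f K"
      using vlabel_eq_Prop[OF fin] by meson
    then show "x \<in> f ` inscribed V E"
      by simp
  qed
  obtain w where "w \<in> W" "2 \<le> card (props w)"
    using assms(2) by blast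
  moreover have "props w = props w0"
    using \<open>w \<in> W\<close> props_cls by (simp add: W w0_def lab_def)
  ultimately have "finite (props w0)" "\<not> card (props w0) \<le> Suc 0"
    using card_ge_0_finite[of "props w0"] by auto
  then obtain x1 x2 where "x1 \<in> props w0" "x2 \<in> props w0" "x1 \<noteq> x2"
    using card_le_Suc0_iff_eq by blast
  then obtain K1 K2 where two: "K1 \<in> inscribed V E" "K2 \<in> inscribed V E" "K1 \<noteq> K2"
    using letters by blast
  obtain p0 t where p0: "p0 < length cyc" and w1: "map lab (rotate p0 cyc) = Sig # t"
    and "Sig \<notin> set t"
    and parity: "\<And>S. S \<noteq> {} \<Longrightarrow> S \<subseteq> f ` inscribed V E \<Longrightarrow> gap_parity S (Sig # t @ [Sig])"
    using sunoid_rim_word[OF sunoid ms inj two] unfolding lab_def by blast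
  define r where "r = pattern t"
  have "props (Sig # t) = props w0"
    unfolding w1[symmetric] by (simp add: props_def w0_def)
  then have "props r \<subseteq> f ` inscribed V E"
    using letters by (simp add: r_def)
  have "rim_parity r"
    unfolding rim_parity_def
  proof (intro conjI allI impI)
    show "Sig \<notin> set r"
      using \<open>Sig \<notin> set t\<close> mem_pattern_iff[of Sig t] by (simp add: r_def)
    fix S
    assume "S \<noteq> {} \<and> S \<subseteq> props r"
    then have "gap_parity S (Sig # t @ [Sig])"
      using parity \<open>props r \<subseteq> f ` inscribed V E\<close> by blast
    then show "gap_parity S (Sig # r @ [Sig])"
      using gap_parity_pattern[of S Sig "t @ [Sig]"] pattern_append[of "[Sig]" t]
      by (simp add: r_def pattern_Cons_not_Eps)
  qed
  moreover have "\<exists>m. pattern w0 = rotate m (Sig # r)"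
  proof -
    have "rotate r0 cyc = rotate (r0 + length cyc - p0) (rotate p0 cyc)"
      using p0 by (simp add: rotate_rotate) (metis rotate_conv_mod mod_add_self2)
    then have "w0 = rotate (r0 + length cyc - p0) (Sig # t)"
      by (simp add: w0_def rotate_map flip: w1)
    moreover have "cyc \<noteq> []"
      using r0 by auto
    then have "hd w0 = lab (cyc ! r0)"
      using r0(1) hd_rotate_conv_nth[of cyc r0] by (simp add: w0_def hd_map)
    then have "hd w0 \<noteq> Eps"
      using r0(2) vlabel_eq_Eps_iff[of V E f "cyc ! r0"] by (simp add: lab_def)
    ultimately show ?thesis
      using pattern_rotate[of "Sig # t"] by (simp add: r_def pattern_Cons_not_Eps)
  qed
  then have "\<forall>u\<in>W. cyc_rel (pattern u) (Sig # r)"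
    using cyc_rel_rotate by (auto simp: W cls_def approx_def w0_def lab_def)
  moreover have "eps_reduced r"
    by (simp add: r_def eps_reduced_pattern)
  ultimately show ?thesis
    using that by blast
qed

theorem lemma5:
  fixes W :: "'a letter list set" and a :: 'a
  assumes "sunword W"
    and "\<exists>w\<in>W. card {x. Prop x \<in> set w} \<ge> 2"
    and "induced_least W a"
  shows "\<exists>xs ls. length xs = length ls \<and> length xs \<ge> 2 \<and> xs ! 0 = a \<and>
    (\<forall>h. Suc h < length xs \<longrightarrow> xs ! h \<noteq> xs ! Suc h) \<and>
    (\<forall>h < length ls. ls ! h > 0) \<and>
    block_word xs ls \<in> W \<and>
    odd (ls ! 0) \<and> odd (last ls) \<and>
    (\<forall>h. 0 < h \<and> Suc h < length xs \<longrightarrow> (odd (ls ! h) \<longleftrightarrow> xs ! (h - 1) \<noteq> xs ! Suc h))"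
proof -
  obtain r where rep: "\<forall>u\<in>W. cyc_rel (pattern u) (Sig # r)" "eps_reduced r" "rim_parity r"
    using sunword_reduced_representative assms(1,2) unfolding props_def by blast
  obtain u where u: "Sig # u \<in> W" "pattern (Sig # u) = Sig # u" "Prop a \<in> set u"
    and least: "\<forall>b. Prop b \<in> set u \<and> b \<noteq> a \<longrightarrow> ldist (vword u) (Prop a) < ldist (vword u) (Prop b)"
    using assms(3) unfolding induced_least_def by blast
  have "Sig \<notin> set r"
    using rep(3) by (simp add: rim_parity_def)
  then have "u = r \<or> u = rev r"
    using cyc_rel_Sig_Cons rep(1) u(1,2) by metis
  then have "rim_parity u" "props u = props r"
    using rep(3) by auto
  have "eps_reduced u"
    using eps_reduced_pattern[of "Sig # u"] u(2) by (simp add: eps_reduced_Cons)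
  obtain w where "w \<in> W" "2 \<le> card (props w)"
    using assms(2) unfolding props_def by blast
  moreover have "props w = props u"
    using rep(1) \<open>w \<in> W\<close> props_cyc_rel[of "pattern w" "Sig # r"] \<open>props u = props r\<close>
    by simp
  ultimately have "finite (props u)" "\<not> card (props u) \<le> Suc 0"
    using card_ge_0_finite[of "props u"] by auto
  then obtain p q where "p \<in> props u" "q \<in> props u" "p \<noteq> q"
    using card_le_Suc0_iff_eq by blast
  then obtain xs ls where xs: "length xs = length ls" "length xs \<ge> 2" "Prop (xs ! 0) = hd u"
    "\<forall>h. Suc h < length xs \<longrightarrow> xs ! h \<noteq> xs ! Suc h" "\<forall>h < length ls. ls ! h > 0"
    "block_word xs ls = Sig # u" "odd (ls ! 0)" "odd (last ls)"
    "\<forall>h. 0 < h \<and> Suc h < length xs \<longrightarrow> (odd (ls ! h) \<longleftrightarrow> xs ! (h - 1) \<noteq> xs ! Suc h)"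
    using block_word_of_rim_parity[OF \<open>eps_reduced u\<close> \<open>rim_parity u\<close>] by blast
  have "xs ! 0 = a"
  proof (rule ccontr)
    assume "xs ! 0 \<noteq> a"
    have "u \<noteq> []"
      using u(3) by auto
    then have "ldist (vword u) (Prop a) < 3"
      using least ldist_vword_hd[of u "xs ! 0"] xs(3) \<open>xs ! 0 \<noteq> a\<close> by (metis hd_in_set order_less_le_trans)
    then show False
      using ldist_vword_Prop[OF u(3)] by simp
  qed
  then show ?thesis
    using xs u(1) by metis
qed

end
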